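(* Let $A$ be a nondegenerate finite quadratic form, and let $Q$ be a fixed finite orthogonal direct sum of copies of $u(2)$ and $v(2)$ such that there exists an embedding $Q\hookrightarrow A$. Then the orthogonal complement $Q^\perp\subset A$ is determined uniquely up to isometry by $A$ and $Q$; that is, for any two embeddings $Q\hookrightarrow A$, the orthogonal complements of the images are isometric finite quadratic forms.
   Context: A finite quadratic form is a finite abelian group $A$ with a quadratic form $q:A\to\mathbb Q/2\mathbb Z$ whose associated bilinear form $b:A\times A\to\mathbb Q/\mathbb Z$ is symmetric bilinear with $q(x+y)=q(x)+q(y)+2b(x,y)$; it is nondegenerate if $b$ is. An embedding is an injective homomorphism preserving $q$, and $Q^\perp$ is the orthogonal complement with respect to $b$. The forms $u(2)$ and $v(2)$ are on $(\mathbb Z/2\mathbb Z)^2$ with Gram matrices $\begin{pmatrix}0&1/2\\1/2&0\end{pmatrix}$ and $\begin{pmatrix}1&1/2\\1/2&1\end{pmatrix}$ respectively, diagonal entries (values of $q$) in $\mathbb Q/2\mathbb Z$ and off-diagonal entries in $\mathbb Q/\mathbb Z$ (they are the discriminant forms of even 2-adic lattices $2^{+2}_{II}$ and $2^{-2}_{II}$, e.g. of $U(2)$ resp. $D_4$). *)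

theory Defs
  imports "HOL-Algebra.Algebra"
begin

text \<open>Finite abelian groups are HOL-Algebra commutative groups (written multiplicatively,
  the group law standing for the addition of the abelian group).  A value of Q/2Z (resp. Q/Z)
  is represented by a rational number, read modulo 2 (resp. modulo 1).\<close>

definition cong2 :: "rat \<Rightarrow> rat \<Rightarrow> bool" where
  "cong2 x y \<longleftrightarrow> (x - y) / 2 \<in> \<int>"

definition cong1 :: "rat \<Rightarrow> rat \<Rightarrow> bool" where
  "cong1 x y \<longleftrightarrow> x - y \<in> \<int>"

definition bform :: "('a, 'b) monoid_scheme \<Rightarrow> ('a \<Rightarrow> rat) \<Rightarrow> 'a \<Rightarrow> 'a \<Rightarrow> rat" where
  "bform G q x y = (q (x \<otimes>\<^bsub>G\<^esub> y) - q x - q y) / 2"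

definition finite_quadratic_form :: "('a, 'b) monoid_scheme \<Rightarrow> ('a \<Rightarrow> rat) \<Rightarrow> bool" where
  "finite_quadratic_form G q \<longleftrightarrow>
     comm_group G \<and> finite (carrier G) \<and>
     (\<forall>x\<in>carrier G. \<forall>n::int. cong2 (q (x [^]\<^bsub>G\<^esub> n)) (of_int (n^2) * q x)) \<and>
     (\<forall>x\<in>carrier G. \<forall>x'\<in>carrier G. \<forall>y\<in>carrier G.
        cong1 (bform G q (x \<otimes>\<^bsub>G\<^esub> x') y) (bform G q x y + bform G q x' y))"

definition nondegenerate :: "('a, 'b) monoid_scheme \<Rightarrow> ('a \<Rightarrow> rat) \<Rightarrow> bool" where
  "nondegenerate G q \<longleftrightarrow>
     (\<forall>x\<in>carrier G. (\<forall>y\<in>carrier G. cong1 (bform G q x y) 0) \<longrightarrow> x = \<one>\<^bsub>G\<^esub>)"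

definition orth_compl :: "('a, 'b) monoid_scheme \<Rightarrow> ('a \<Rightarrow> rat) \<Rightarrow> 'a set \<Rightarrow> 'a set" where
  "orth_compl G q S = {x \<in> carrier G. \<forall>y\<in>S. cong1 (bform G q x y) 0}"

definition qf_embedding ::
  "('c, 'd) monoid_scheme \<Rightarrow> ('c \<Rightarrow> rat) \<Rightarrow> ('a, 'b) monoid_scheme \<Rightarrow> ('a \<Rightarrow> rat) \<Rightarrow> ('c \<Rightarrow> 'a) \<Rightarrow> bool" where
  "qf_embedding H p G q f \<longleftrightarrow>
     f \<in> hom H G \<and> inj_on f (carrier H) \<and> (\<forall>x\<in>carrier H. cong2 (q (f x)) (p x))"

definition qf_isometric ::
  "('c, 'd) monoid_scheme \<Rightarrow> ('c \<Rightarrow> rat) \<Rightarrow> ('a, 'b) monoid_scheme \<Rightarrow> ('a \<Rightarrow> rat) \<Rightarrow> bool" where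
  "qf_isometric H p G q \<longleftrightarrow>
     (\<exists>f. f \<in> hom H G \<and> bij_betw f (carrier H) (carrier G) \<and> (\<forall>x\<in>carrier H. cong2 (q (f x)) (p x)))"

text \<open>The orthogonal direct sum of m copies of u(2) followed by n copies of v(2), on
  (Z/2Z)^(2(m+n)); an element is a 0/1-valued function f on nat supported on {0..<2(m+n)};
  coordinates 2i, 2i+1 span the i-th summand.\<close>
definition sumUV :: "nat \<Rightarrow> nat \<Rightarrow> (nat \<Rightarrow> int) monoid" where
  "sumUV m n = \<lparr> carrier = {f. (\<forall>i. f i \<in> {0, 1}) \<and> (\<forall>i\<ge>2 * (m + n). f i = 0)},
                  monoid.mult = (\<lambda>f g i. (f i + g i) mod 2),
                  one = (\<lambda>i. 0) \<rparr>"

definition qUV :: "nat \<Rightarrow> nat \<Rightarrow> (nat \<Rightarrow> int) \<Rightarrow> rat" where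
  "qUV m n f = of_int ((\<Sum>i<m. f (2*i) * f (2*i+1))
      + (\<Sum>i\<in>{m..<m+n}. f (2*i)^2 + f (2*i) * f (2*i+1) + f (2*i+1)^2))"

end

theory Submission
  imports Defs
begin

text \<open>
  Every isometry between the two embedded copies of Q extends to an isometry of A, which then
  maps one orthogonal complement onto the other.  The extension is built one summand at a time.
  The images of the two basis vectors of a summand form a pair (e, f) of elements of order
  dividing 2 with b(e, f) = 1/2 and q(e) = q(f) = 0 (for u(2)) or 1 (for v(2)) modulo 2.
  For such elements b(x, u) is 0 or 1/2, so reflections x \<mapsto> x + 2b(x, u) u (for q(u) = 1) and
  Eichler transformations x \<mapsto> x + 2b(x, w) u + 2b(x, u) w (for u \<bottom> w, q(u) = q(w) = 0) are
  isometries of all of A.  A case analysis on the values of b between two such pairs moves one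
  onto the other by at most four of these maps, each built from elements of the span of the two
  pairs; hence they fix the summands matched before, which are orthogonal to both pairs.
\<close>

section \<open>Congruences modulo 1 and 2\<close>

lemma cong1_refl [simp]: "cong1 a a"
  by (simp add: cong1_def)

lemma cong1_sym: "cong1 a b \<Longrightarrow> cong1 b a"
  unfolding cong1_def using Ints_minus[of "a - b"] by simp

lemma cong1_trans: "cong1 a b \<Longrightarrow> cong1 b c \<Longrightarrow> cong1 a c"
  unfolding cong1_def using Ints_add[of "a - b" "b - c"] by simp

lemma cong1_add: "cong1 a b \<Longrightarrow> cong1 c d \<Longrightarrow> cong1 (a + c) (b + d)"
  unfolding cong1_def using Ints_add[of "a - b" "c - d"] by (simp add: algebra_simps)

lemma cong1_minus: "cong1 a b \<Longrightarrow> cong1 (- a) (- b)"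
  unfolding cong1_def using Ints_minus[of "a - b"] by simp

lemma cong1_diff: "cong1 a b \<Longrightarrow> cong1 c d \<Longrightarrow> cong1 (a - c) (b - d)"
  unfolding cong1_def using Ints_diff[of "a - b" "c - d"] by (simp add: algebra_simps)

lemma cong2_iff_cong1_half: "cong2 a b \<longleftrightarrow> cong1 (a / 2) (b / 2)"
  by (simp add: cong1_def cong2_def diff_divide_distrib)

lemma cong2_refl [simp]: "cong2 a a"
  by (simp add: cong2_def)

lemma cong2_sym: "cong2 a b \<Longrightarrow> cong2 b a"
  unfolding cong2_iff_cong1_half by (rule cong1_sym)

lemma cong2_trans: "cong2 a b \<Longrightarrow> cong2 b c \<Longrightarrow> cong2 a c"
  unfolding cong2_iff_cong1_half by (rule cong1_trans)

lemma cong2_add: "cong2 a b \<Longrightarrow> cong2 c d \<Longrightarrow> cong2 (a + c) (b + d)"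
  unfolding cong2_iff_cong1_half add_divide_distrib by (rule cong1_add)

lemma cong2_diff: "cong2 a b \<Longrightarrow> cong2 c d \<Longrightarrow> cong2 (a - c) (b - d)"
  unfolding cong2_iff_cong1_half diff_divide_distrib by (rule cong1_diff)

lemma cong2_imp_cong1: "cong2 a b \<Longrightarrow> cong1 a b"
  unfolding cong2_def cong1_def using Ints_add by fastforce

lemma cong1_double: "cong1 a b \<Longrightarrow> cong2 (2 * a) (2 * b)"
  by (simp add: cong2_iff_cong1_half)

lemma half_not_Ints: "(1/2 :: rat) \<notin> \<int>"
proof
  assume "(1/2 :: rat) \<in> \<int>"
  then obtain k where "(1/2 :: rat) = of_int k" by (auto elim: Ints_cases)
  then have "of_int (2 * k) = (1 :: rat)" by simp
  then have "2 * k = 1" by (simp only: of_int_eq_1_iff)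
  then show False by presburger
qed

lemma not_cong1_zero_half: "\<not> (cong1 a 0 \<and> cong1 a (1/2))"
proof
  assume "cong1 a 0 \<and> cong1 a (1/2)"
  then have "(1/2 :: rat) \<in> \<int>"
    unfolding cong1_def using Ints_diff[of a "a - 1/2"] by auto
  then show False using half_not_Ints by blast
qed

lemma cong1_double_zero_cases: "cong1 (2 * a) 0 \<Longrightarrow> cong1 a 0 \<or> cong1 a (1/2)"
proof -
  assume "cong1 (2 * a) 0"
  then obtain k where k: "2 * a = of_int k" by (auto simp: cong1_def elim: Ints_cases)
  show ?thesis
  proof (cases "even k")
    case True
    then obtain j where "k = 2 * j" by auto
    with k have "a = of_int j" by simp
    then show ?thesis by (simp add: cong1_def)
  next
    case False
    then obtain j where "k = 2 * j + 1" using oddE by blast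
    with k have "a - 1/2 = of_int j" by (simp add: field_simps)
    then show ?thesis by (simp add: cong1_def)
  qed
qed

lemma cong1_zero_add_iff:
  assumes a: "cong1 a 0 \<or> cong1 a (1/2)" and b: "cong1 b 0 \<or> cong1 b (1/2)"
    and s: "cong1 s (a + b)"
  shows "cong1 s 0 \<longleftrightarrow> (cong1 a 0 \<longleftrightarrow> cong1 b 0)"
proof -
  define P where "P = (\<not> cong1 a 0)"
  define Q where "Q = (\<not> cong1 b 0)"
  have "cong1 a (of_bool P / 2)" "cong1 b (of_bool Q / 2)"
    using a b by (auto simp: P_def Q_def)
  then have "cong1 s (of_bool P / 2 + of_bool Q / 2)"
    using cong1_trans[OF s cong1_add] by blast
  moreover have "cong1 (of_bool P / 2 + of_bool Q / 2) (of_bool (P \<noteq> Q) / 2 :: rat)"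
    by (cases P; cases Q) (simp_all add: cong1_def)
  ultimately have "cong1 s (of_bool (P \<noteq> Q) / 2)"
    by (rule cong1_trans)
  then show ?thesis
    using not_cong1_zero_half[of s] by (cases "P \<noteq> Q") (auto simp: P_def Q_def dest: cong1_trans)
qed

section \<open>Elements of order two in a quadratic group\<close>

locale quadratic_group = comm_group A for A (structure) +
  fixes q :: "'a \<Rightarrow> rat"
  assumes q_power: "x \<in> carrier A \<Longrightarrow> cong2 (q (x [^] (k::int))) (of_int (k\<^sup>2) * q x)"
    and bform_mult_left: "\<lbrakk>x \<in> carrier A; x' \<in> carrier A; y \<in> carrier A\<rbrakk> \<Longrightarrow>
      cong1 (bform A q (x \<otimes> x') y) (bform A q x y + bform A q x' y)"

lemma finite_quadratic_form_imp_quadratic_group: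
  "finite_quadratic_form A q \<Longrightarrow> quadratic_group A q"
  unfolding finite_quadratic_form_def quadratic_group_def quadratic_group_axioms_def by blast

context quadratic_group
begin

definition two_torsion :: "'a \<Rightarrow> bool" where
  "two_torsion x \<longleftrightarrow> x \<in> carrier A \<and> x \<otimes> x = \<one>"

definition q_parity :: "'a \<Rightarrow> bool \<Rightarrow> bool" where
  "q_parity x c \<longleftrightarrow> cong2 (q x) (of_bool c)"

text \<open>When y has order dividing 2, b(x, y) is 0 or 1/2 modulo 1, and \<open>nonorth x y\<close> says it is 1/2.\<close>

definition nonorth :: "'a \<Rightarrow> 'a \<Rightarrow> bool" where
  "nonorth x y \<longleftrightarrow> \<not> cong1 (bform A q x y) 0"

lemma mem_orth_compl_iff: "x \<in> orth_compl A q S \<longleftrightarrow> x \<in> carrier A \<and> (\<forall>y\<in>S. \<not> nonorth x y)"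
  by (simp add: orth_compl_def nonorth_def)

lemma two_torsion_carrier: "two_torsion x \<Longrightarrow> x \<in> carrier A"
  by (simp add: two_torsion_def)

lemma two_torsion_one [simp]: "two_torsion \<one>"
  by (simp add: two_torsion_def)

lemma two_torsion_mult: "two_torsion x \<Longrightarrow> two_torsion y \<Longrightarrow> two_torsion (x \<otimes> y)"
  unfolding two_torsion_def by (simp add: m_ac)

lemma two_torsion_cancel_left: "two_torsion x \<Longrightarrow> y \<in> carrier A \<Longrightarrow> x \<otimes> (x \<otimes> y) = y"
  unfolding two_torsion_def by (metis m_assoc l_one)

lemma two_torsion_cancel_around: "two_torsion x \<Longrightarrow> y \<in> carrier A \<Longrightarrow> x \<otimes> (y \<otimes> x) = y"
  using two_torsion_cancel_left by (simp add: two_torsion_def m_comm)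

lemma two_torsion_cancel_right: "two_torsion u \<Longrightarrow> x \<in> carrier A \<Longrightarrow> x \<otimes> u \<otimes> u = x"
  unfolding two_torsion_def by (simp add: m_assoc)

lemma two_torsion_mult_mult:
  assumes u: "two_torsion u" and x: "x \<in> carrier A" and y: "y \<in> carrier A"
  shows "x \<otimes> u \<otimes> (y \<otimes> u) = x \<otimes> y"
proof -
  have uc: "u \<in> carrier A" using u by (rule two_torsion_carrier)
  have "x \<otimes> u \<otimes> (y \<otimes> u) = x \<otimes> y \<otimes> u \<otimes> u"
    using x y uc by (simp add: m_ac)
  then show ?thesis
    using two_torsion_cancel_right[OF u] x y by simp
qed

lemma two_torsion_if_mult:
  "two_torsion u \<Longrightarrow> (if s then u else \<one>) \<otimes> (if t then u else \<one>) = (if s \<noteq> t then u else \<one>)"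
  by (simp add: two_torsion_def)

lemma q_one: "cong2 (q \<one>) 0"
  using q_power[of \<one> 0] by simp

lemma bform_sym: "x \<in> carrier A \<Longrightarrow> y \<in> carrier A \<Longrightarrow> bform A q x y = bform A q y x"
  by (simp add: bform_def m_comm)

lemma nonorth_sym: "x \<in> carrier A \<Longrightarrow> y \<in> carrier A \<Longrightarrow> nonorth x y \<longleftrightarrow> nonorth y x"
  by (simp add: nonorth_def bform_sym)

lemma bform_mult_right: "\<lbrakk>x \<in> carrier A; y \<in> carrier A; y' \<in> carrier A\<rbrakk> \<Longrightarrow>
    cong1 (bform A q x (y \<otimes> y')) (bform A q x y + bform A q x y')"
  using bform_mult_left[of y y' x] by (simp add: bform_sym)

lemma bform_one: "x \<in> carrier A \<Longrightarrow> cong1 (bform A q x \<one>) 0"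
  using cong1_minus[of "q \<one> / 2" 0] q_one by (simp add: bform_def cong2_iff_cong1_half)

lemma nonorth_one [simp]: "x \<in> carrier A \<Longrightarrow> \<not> nonorth x \<one>" "x \<in> carrier A \<Longrightarrow> \<not> nonorth \<one> x"
  using bform_one nonorth_sym[of x \<one>] by (auto simp: nonorth_def)

lemma bform_two_torsion_cases:
  assumes x: "x \<in> carrier A" and z: "two_torsion z"
  shows "cong1 (bform A q x z) 0 \<or> cong1 (bform A q x z) (1/2)"
proof (rule cong1_double_zero_cases)
  have zc: "z \<in> carrier A" using z by (rule two_torsion_carrier)
  have "cong1 (bform A q x z + bform A q x z) (bform A q x (z \<otimes> z))"
    using bform_mult_right[OF x zc zc] by (rule cong1_sym)
  also have "bform A q x (z \<otimes> z) = bform A q x \<one>"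
    using z by (simp add: two_torsion_def)
  finally show "cong1 (2 * bform A q x z) 0"
    unfolding mult_2 using bform_one[OF x] by (rule cong1_trans)
qed

lemma nonorth_mult_left:
  assumes x: "x \<in> carrier A" and y: "y \<in> carrier A" and z: "two_torsion z"
  shows "nonorth (x \<otimes> y) z \<longleftrightarrow> nonorth x z \<noteq> nonorth y z"
proof -
  have "cong1 (bform A q (x \<otimes> y) z) 0 \<longleftrightarrow> (cong1 (bform A q x z) 0 \<longleftrightarrow> cong1 (bform A q y z) 0)"
    using bform_mult_left[OF x y two_torsion_carrier[OF z]]
    by (rule cong1_zero_add_iff[OF bform_two_torsion_cases[OF x z] bform_two_torsion_cases[OF y z]])
  then show ?thesis
    by (simp add: nonorth_def)
qed

lemma nonorth_mult_right:
  assumes x: "x \<in> carrier A" and y: "two_torsion y" and z: "two_torsion z"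
  shows "nonorth x (y \<otimes> z) \<longleftrightarrow> nonorth x y \<noteq> nonorth x z"
proof -
  have "cong1 (bform A q x (y \<otimes> z)) 0 \<longleftrightarrow> (cong1 (bform A q x y) 0 \<longleftrightarrow> cong1 (bform A q x z) 0)"
    using bform_mult_right[OF x two_torsion_carrier[OF y] two_torsion_carrier[OF z]]
    by (rule cong1_zero_add_iff[OF bform_two_torsion_cases[OF x y] bform_two_torsion_cases[OF x z]])
  then show ?thesis
    by (simp add: nonorth_def)
qed

lemma double_bform_two_torsion:
  assumes x: "x \<in> carrier A" and z: "two_torsion z"
  shows "cong2 (2 * bform A q x z) (of_bool (nonorth x z))"
  using bform_two_torsion_cases[OF x z]
proof
  assume "cong1 (bform A q x z) 0"
  then show ?thesis
    using cong1_double by (fastforce simp: nonorth_def)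
next
  assume half: "cong1 (bform A q x z) (1/2)"
  then have "nonorth x z"
    using not_cong1_zero_half by (auto simp: nonorth_def)
  then show ?thesis
    using cong1_double[OF half] by simp
qed

lemma q_mult_two_torsion:
  assumes "x \<in> carrier A" "two_torsion z"
  shows "cong2 (q (x \<otimes> z)) (q x + q z + of_bool (nonorth x z))"
proof -
  have "q (x \<otimes> z) = q x + q z + 2 * bform A q x z"
    unfolding bform_def by (simp add: field_simps)
  then show ?thesis
    using cong2_add[OF cong2_refl double_bform_two_torsion[OF assms]] by simp
qed

lemma q_mult_two_torsion_parity:
  assumes "x \<in> carrier A" "two_torsion z" "q_parity z c"
  shows "cong2 (q (x \<otimes> z)) (q x + of_bool (c \<noteq> nonorth x z))"
proof -
  have "cong2 (q x + q z + of_bool (nonorth x z)) (q x + of_bool c + of_bool (nonorth x z))"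
    using assms(3) unfolding q_parity_def by (intro cong2_add cong2_refl)
  moreover have "cong2 (q x + of_bool c + of_bool t) (q x + of_bool (c \<noteq> t))" for t
    by (cases c; cases t) (simp_all add: cong2_def)
  ultimately show ?thesis
    using q_mult_two_torsion[OF assms(1,2)] cong2_trans by blast
qed

lemma q_parity_mult:
  assumes "x \<in> carrier A" "two_torsion z" "q_parity x a" "q_parity z c"
  shows "q_parity (x \<otimes> z) ((a \<noteq> c) \<noteq> nonorth x z)"
proof -
  have "cong2 (q x + q z + of_bool (nonorth x z)) (of_bool a + of_bool c + of_bool (nonorth x z))"
    using assms(3,4) unfolding q_parity_def by (intro cong2_add cong2_refl)
  moreover have "cong2 (of_bool a + of_bool c + of_bool t) (of_bool ((a \<noteq> c) \<noteq> t))" for t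
    by (cases a; cases c; cases t) (simp_all add: cong2_def)
  ultimately show ?thesis
    unfolding q_parity_def using q_mult_two_torsion[OF assms(1,2)] cong2_trans by blast
qed

lemma not_nonorth_self:
  assumes u: "two_torsion u" and c: "q_parity u c"
  shows "\<not> nonorth u u"
proof -
  have "bform A q u u = q \<one> / 2 - q u"
    using u by (simp add: bform_def two_torsion_def)
  moreover have "cong1 (q \<one> / 2) 0"
    using q_one by (simp add: cong2_iff_cong1_half)
  moreover have "cong1 (q u) 0"
    using cong2_imp_cong1[OF c[unfolded q_parity_def]] by (cases c) (auto simp: cong1_def)
  ultimately show ?thesis
    unfolding nonorth_def using cong1_diff[of "q \<one> / 2" 0 "q u" 0] by simp
qed

section \<open>Isometries\<close>

lemma embedding_bform:
  assumes f: "qf_embedding Q p A q f" and x: "x \<in> carrier Q" and y: "y \<in> carrier Q"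
    and xy: "x \<otimes>\<^bsub>Q\<^esub> y \<in> carrier Q"
  shows "cong1 (bform A q (f x) (f y)) (bform Q p x y)"
proof -
  have "cong2 (q (f (x \<otimes>\<^bsub>Q\<^esub> y)) - q (f x) - q (f y)) (p (x \<otimes>\<^bsub>Q\<^esub> y) - p x - p y)"
    using f x y xy unfolding qf_embedding_def by (intro cong2_diff) auto
  moreover have "f (x \<otimes>\<^bsub>Q\<^esub> y) = f x \<otimes> f y"
    using f x y by (simp add: qf_embedding_def hom_mult)
  ultimately show ?thesis
    by (simp add: bform_def cong2_iff_cong1_half)
qed

definition isometry :: "('a \<Rightarrow> 'a) \<Rightarrow> bool" where
  "isometry h \<longleftrightarrow> h \<in> hom A A \<and> bij_betw h (carrier A) (carrier A) \<and>
     (\<forall>x\<in>carrier A. cong2 (q (h x)) (q x))"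

lemma isometry_carrier: "isometry h \<Longrightarrow> x \<in> carrier A \<Longrightarrow> h x \<in> carrier A"
  unfolding isometry_def by (auto intro: hom_in_carrier)

lemma isometry_mult: "isometry h \<Longrightarrow> x \<in> carrier A \<Longrightarrow> y \<in> carrier A \<Longrightarrow> h (x \<otimes> y) = h x \<otimes> h y"
  unfolding isometry_def by (auto intro: hom_mult)

lemma isometry_q: "isometry h \<Longrightarrow> x \<in> carrier A \<Longrightarrow> cong2 (q (h x)) (q x)"
  by (simp add: isometry_def)

lemma isometry_id: "isometry id"
  by (simp add: isometry_def hom_def)

lemma isometry_comp:
  assumes g: "isometry g" and h: "isometry h"
  shows "isometry (g \<circ> h)"
  unfolding isometry_def
proof (intro conjI ballI)
  show "g \<circ> h \<in> hom A A"
    by (rule homI) (simp_all add: isometry_carrier[OF g] isometry_carrier[OF h]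
        isometry_mult[OF g] isometry_mult[OF h])
  show "bij_betw (g \<circ> h) (carrier A) (carrier A)"
    using g h unfolding isometry_def by (blast intro: bij_betw_trans)
  show "cong2 (q ((g \<circ> h) x)) (q x)" if "x \<in> carrier A" for x
    using isometry_q[OF g isometry_carrier[OF h that]] isometry_q[OF h that]
    by (auto intro: cong2_trans)
qed

lemma involution_isometry:
  assumes closed: "\<And>x. x \<in> carrier A \<Longrightarrow> h x \<in> carrier A"
    and mult: "\<And>x y. x \<in> carrier A \<Longrightarrow> y \<in> carrier A \<Longrightarrow> h (x \<otimes> y) = h x \<otimes> h y"
    and invol: "\<And>x. x \<in> carrier A \<Longrightarrow> h (h x) = x"
    and q: "\<And>x. x \<in> carrier A \<Longrightarrow> cong2 (q (h x)) (q x)"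
  shows "isometry h"
  unfolding isometry_def
proof (intro conjI ballI)
  show "h \<in> hom A A"
    by (intro homI closed mult)
  show "bij_betw h (carrier A) (carrier A)"
    by (rule bij_betwI[of _ _ _ h]) (auto intro: closed invol)
qed (rule q)

lemma isometry_imp_qf_embedding: "isometry h \<Longrightarrow> qf_embedding A q A q h"
  by (simp add: isometry_def qf_embedding_def bij_betw_def)

lemma isometry_bform:
  assumes "isometry h" "x \<in> carrier A" "y \<in> carrier A"
  shows "cong1 (bform A q (h x) (h y)) (bform A q x y)"
  using embedding_bform[OF isometry_imp_qf_embedding] assms by simp

lemma isometry_nonorth:
  assumes "isometry h" "x \<in> carrier A" "y \<in> carrier A"
  shows "nonorth (h x) (h y) \<longleftrightarrow> nonorth x y"
  using isometry_bform[OF assms] cong1_sym cong1_trans unfolding nonorth_def by blast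

lemma isometry_two_torsion:
  assumes h: "isometry h" and x: "two_torsion x"
  shows "two_torsion (h x)"
proof -
  have xc: "x \<in> carrier A" using x by (rule two_torsion_carrier)
  have "h x \<otimes> h x = h \<one>"
    using x by (simp add: isometry_mult[OF h xc xc, symmetric] two_torsion_def)
  also have "h \<one> = \<one>"
    using h by (simp add: isometry_def hom_one)
  finally show ?thesis
    using isometry_carrier[OF h xc] by (simp add: two_torsion_def)
qed

lemma isometry_q_parity:
  assumes "isometry h" "x \<in> carrier A"
  shows "q_parity (h x) c \<longleftrightarrow> q_parity x c"
  using isometry_q[OF assms] cong2_sym cong2_trans unfolding q_parity_def by blast

lemma isometry_image_orth_compl:
  assumes h: "isometry h" and S: "S \<subseteq> carrier A"
  shows "h ` orth_compl A q S = orth_compl A q (h ` S)"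
proof -
  have iff: "h x \<in> orth_compl A q (h ` S) \<longleftrightarrow> x \<in> orth_compl A q S" if x: "x \<in> carrier A" for x
    using isometry_nonorth[OF h x] isometry_carrier[OF h x] x S
    by (auto simp: orth_compl_def nonorth_def)
  have "orth_compl A q (h ` S) \<subseteq> h ` orth_compl A q S"
  proof
    fix y assume y: "y \<in> orth_compl A q (h ` S)"
    moreover have "carrier A = h ` carrier A"
      using h by (simp add: isometry_def bij_betw_def)
    ultimately obtain x where "x \<in> carrier A" "y = h x"
      by (auto simp: orth_compl_def)
    with y iff show "y \<in> h ` orth_compl A q S" by blast
  qed
  moreover have "h ` orth_compl A q S \<subseteq> orth_compl A q (h ` S)"
    using iff by (auto simp: orth_compl_def)
  ultimately show ?thesis by blast
qed

lemma isometry_restrict_orth_compl: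
  assumes h: "isometry h" and S: "S \<subseteq> carrier A"
  shows "qf_isometric (A\<lparr>carrier := orth_compl A q S\<rparr>) q (A\<lparr>carrier := orth_compl A q (h ` S)\<rparr>) q"
  unfolding qf_isometric_def
proof (intro exI conjI ballI)
  have sub: "orth_compl A q S \<subseteq> carrier A"
    by (auto simp: orth_compl_def)
  show "h \<in> hom (A\<lparr>carrier := orth_compl A q S\<rparr>) (A\<lparr>carrier := orth_compl A q (h ` S)\<rparr>)"
    using isometry_image_orth_compl[OF h S] sub isometry_mult[OF h]
    by (intro homI) (auto simp: subset_iff)
  show "bij_betw h (carrier (A\<lparr>carrier := orth_compl A q S\<rparr>)) (carrier (A\<lparr>carrier := orth_compl A q (h ` S)\<rparr>))"
    using isometry_image_orth_compl[OF h S] h sub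
    by (auto simp: isometry_def bij_betw_def intro: inj_on_subset)
  show "cong2 (q (h x)) (q x)" if "x \<in> carrier (A\<lparr>carrier := orth_compl A q S\<rparr>)" for x
    using that sub by (auto intro: isometry_q[OF h])
qed

section \<open>Transvections and hyperbolic pairs\<close>

text \<open>In additive notation, x \<mapsto> x + 2b(x, u) u and x \<mapsto> x + 2b(x, w) u + 2b(x, u) w.\<close>

definition reflection :: "'a \<Rightarrow> 'a \<Rightarrow> 'a" where
  "reflection u x = (if nonorth x u then x \<otimes> u else x)"

definition eichler :: "'a \<Rightarrow> 'a \<Rightarrow> 'a \<Rightarrow> 'a" where
  "eichler u w x = x \<otimes> (if nonorth x w then u else \<one>) \<otimes> (if nonorth x u then w else \<one>)"

lemma reflection_isometry:
  assumes u: "two_torsion u" and odd: "q_parity u True"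
  shows "isometry (reflection u)"
proof (rule involution_isometry)
  have uc: "u \<in> carrier A" using u by (rule two_torsion_carrier)
  have uu: "\<not> nonorth u u" using u odd by (rule not_nonorth_self)
  fix x assume x: "x \<in> carrier A"
  show "reflection u x \<in> carrier A"
    using x uc by (simp add: reflection_def)
  show "reflection u (reflection u x) = x"
    using x uc uu two_torsion_cancel_right[OF u x]
    by (simp add: reflection_def nonorth_mult_left[OF x uc u])
  show "cong2 (q (reflection u x)) (q x)"
    using q_mult_two_torsion_parity[OF x u odd] by (cases "nonorth x u") (simp_all add: reflection_def)
  fix y assume y: "y \<in> carrier A"
  show "reflection u (x \<otimes> y) = reflection u x \<otimes> reflection u y"
    using two_torsion_mult_mult[OF u x y] x y uc
    by (simp add: reflection_def nonorth_mult_left[OF x y u] m_ac)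
qed

context
  fixes u w
  assumes u: "two_torsion u" and w: "two_torsion w"
    and qu: "q_parity u False" and qw: "q_parity w False" and uw: "\<not> nonorth u w"
begin

lemma eichler_eq:
  "eichler u w x = x \<otimes> (if nonorth x w then u else \<one>) \<otimes> (if nonorth x u then w else \<one>)"
  by (simp add: eichler_def)

lemma eichler_factors:
  shows "two_torsion (if t then u else \<one>)" "q_parity (if t then u else \<one>) False"
    and "two_torsion (if t then w else \<one>)" "q_parity (if t then w else \<one>) False"
  using u w qu qw q_one by (simp_all add: q_parity_def)

lemma nonorth_eichler:
  assumes x: "x \<in> carrier A"
  shows "nonorth (eichler u w x) w \<longleftrightarrow> nonorth x w" "nonorth (eichler u w x) u \<longleftrightarrow> nonorth x u"
proof -
  have uc: "u \<in> carrier A" and wc: "w \<in> carrier A"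
    using u w by (simp_all add: two_torsion_carrier)
  have "\<not> nonorth u u" "\<not> nonorth w w" "\<not> nonorth w u"
    using not_nonorth_self[OF u qu] not_nonorth_self[OF w qw] uw nonorth_sym[OF uc wc] by simp_all
  then show "nonorth (eichler u w x) w \<longleftrightarrow> nonorth x w" "nonorth (eichler u w x) u \<longleftrightarrow> nonorth x u"
    using x uc wc uw by (simp_all add: eichler_eq nonorth_mult_left u w)
qed

lemma eichler_eichler:
  assumes x: "x \<in> carrier A"
  shows "eichler u w (eichler u w x) = x"
proof -
  define U where "U = (if nonorth x w then u else \<one>)"
  define W where "W = (if nonorth x u then w else \<one>)"
  have U: "two_torsion U" and W: "two_torsion W"
    using eichler_factors by (simp_all add: U_def W_def)
  have "eichler u w (eichler u w x) = eichler u w x \<otimes> U \<otimes> W"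
    unfolding eichler_eq[of "eichler u w x"] nonorth_eichler[OF x] U_def W_def ..
  also have "\<dots> = x \<otimes> U \<otimes> W \<otimes> U \<otimes> W"
    by (simp add: eichler_eq U_def W_def)
  also have "\<dots> = x"
    using two_torsion_mult_mult[OF W m_closed[OF x] two_torsion_carrier[OF U]]
      two_torsion_cancel_right[OF U x] x U W
    by (simp add: m_assoc two_torsion_carrier)
  finally show ?thesis .
qed

lemma q_eichler:
  assumes x: "x \<in> carrier A"
  shows "cong2 (q (eichler u w x)) (q x)"
proof -
  define U where "U = (if nonorth x w then u else \<one>)"
  define W where "W = (if nonorth x u then w else \<one>)"
  have U: "two_torsion U" "q_parity U False" and W: "two_torsion W" "q_parity W False"
    using eichler_factors by (simp_all add: U_def W_def)
  have xU: "x \<otimes> U \<in> carrier A"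
    using x U by (simp add: two_torsion_carrier)
  define t where "t = (nonorth x w \<and> nonorth x u)"
  have "nonorth x U = t"
    using x by (simp add: t_def U_def)
  moreover have "nonorth (x \<otimes> U) W = t"
    using x u w uw by (cases "nonorth x u") (simp_all add: t_def U_def W_def nonorth_mult_left two_torsion_carrier)
  ultimately have "cong2 (q (x \<otimes> U)) (q x + of_bool t)"
    and "cong2 (q (x \<otimes> U \<otimes> W)) (q (x \<otimes> U) + of_bool t)"
    using q_mult_two_torsion_parity[OF x U] q_mult_two_torsion_parity[OF xU W] by simp_all
  then have "cong2 (q (x \<otimes> U \<otimes> W)) (q x + of_bool t + of_bool t)"
    using cong2_add[OF _ cong2_refl] cong2_trans by blast
  moreover have "cong2 (q x + of_bool t + of_bool t) (q x)"
    by (cases t) (simp_all add: cong2_def)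
  ultimately show ?thesis
    unfolding eichler_eq U_def W_def by (rule cong2_trans)
qed

lemma eichler_mult:
  assumes x: "x \<in> carrier A" and y: "y \<in> carrier A"
  shows "eichler u w (x \<otimes> y) = eichler u w x \<otimes> eichler u w y"
proof -
  have uc: "u \<in> carrier A" and wc: "w \<in> carrier A"
    using u w by (simp_all add: two_torsion_carrier)
  have "eichler u w (x \<otimes> y) = x \<otimes> y
      \<otimes> ((if nonorth x w then u else \<one>) \<otimes> (if nonorth y w then u else \<one>))
      \<otimes> ((if nonorth x u then w else \<one>) \<otimes> (if nonorth y u then w else \<one>))"
    by (simp add: eichler_eq nonorth_mult_left[OF x y w] nonorth_mult_left[OF x y u]
        two_torsion_if_mult[OF u] two_torsion_if_mult[OF w])
  also have "\<dots> = eichler u w x \<otimes> eichler u w y"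
    using x y uc wc by (simp add: eichler_eq m_ac)
  finally show ?thesis .
qed

lemma eichler_isometry: "isometry (eichler u w)"
  using u w eichler_eichler q_eichler eichler_mult
  by (intro involution_isometry) (simp_all add: eichler_eq two_torsion_carrier)

end

lemma reflection_exchanges:
  assumes x: "two_torsion x" and y: "two_torsion y" and "q_parity x c" "q_parity y c"
    and xy: "nonorth x y"
  shows "isometry (reflection (x \<otimes> y))" "reflection (x \<otimes> y) x = y"
proof -
  have xc: "x \<in> carrier A" using x by (rule two_torsion_carrier)
  have "q_parity (x \<otimes> y) True"
    using q_parity_mult[OF xc y assms(3,4)] xy by simp
  then show "isometry (reflection (x \<otimes> y))"
    by (rule reflection_isometry[OF two_torsion_mult[OF x y]])
  have "nonorth x (x \<otimes> y)"
    using xy not_nonorth_self[OF x assms(3)] nonorth_mult_right[OF xc x y] by simp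
  then show "reflection (x \<otimes> y) x = y"
    using two_torsion_cancel_left[OF x two_torsion_carrier[OF y]] by (simp add: reflection_def)
qed

lemma eichler_exchanges:
  assumes y: "two_torsion y" and a: "two_torsion a" and b: "two_torsion b"
    and qy: "q_parity y False" and "q_parity a c" "q_parity b c"
    and ab: "\<not> nonorth a b" and ya: "nonorth y a" and yb: "nonorth y b"
  shows "isometry (eichler y (a \<otimes> b))" "eichler y (a \<otimes> b) b = a"
proof -
  have ac: "a \<in> carrier A" and bc: "b \<in> carrier A" and yc: "y \<in> carrier A"
    using a b y by (simp_all add: two_torsion_carrier)
  have "q_parity (a \<otimes> b) False" "\<not> nonorth y (a \<otimes> b)"
    using q_parity_mult[OF ac b assms(5,6)] ab ya yb nonorth_mult_right[OF yc a b] by simp_all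
  then show "isometry (eichler y (a \<otimes> b))"
    using eichler_isometry[OF y two_torsion_mult[OF a b] qy] by blast
  have "\<not> nonorth b (a \<otimes> b)" "nonorth b y"
    using ab yb not_nonorth_self[OF b assms(6)] nonorth_mult_right[OF bc a b] nonorth_sym[OF ac bc]
      nonorth_sym[OF yc bc] by simp_all
  then have "eichler y (a \<otimes> b) b = b \<otimes> (a \<otimes> b)"
    using bc by (simp add: eichler_def)
  also have "\<dots> = a"
    using two_torsion_cancel_around[OF b ac] .
  finally show "eichler y (a \<otimes> b) b = a" .
qed

lemma exists_isometry_via_partner:
  assumes e: "two_torsion e" and e': "two_torsion e'" and y: "two_torsion y"
    and qe: "q_parity e c" and qe': "q_parity e' c" and ee': "\<not> nonorth e e'"
    and ye: "nonorth y e" and ye': "nonorth y e'"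
    and qy: "q_parity y False \<or> c \<and> q_parity y True"
  shows "\<exists>\<rho>. isometry \<rho> \<and> \<rho> e' = e \<and> (\<forall>x\<in>orth_compl A q {e, e', y}. \<rho> x = x)"
proof -
  have ec: "e \<in> carrier A" and e'c: "e' \<in> carrier A" and yc: "y \<in> carrier A"
    using e e' y by (simp_all add: two_torsion_carrier)
  note simps = nonorth_mult_left nonorth_mult_right two_torsion_mult e e' y ec e'c yc
  from qy show ?thesis
  proof
    assume "q_parity y False"
    then show ?thesis
      using eichler_exchanges[OF y e e' _ qe qe' ee' ye ye']
      by (intro exI[of _ "eichler y (e \<otimes> e')"]) (auto simp: mem_orth_compl_iff eichler_def simps)
  next
    assume "c \<and> q_parity y True"
    then have qy: "q_parity y c"
      by simp
    have "nonorth e' y"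
      using ye' nonorth_sym e'c yc by blast
    then obtain r1: "isometry (reflection (e' \<otimes> y))" "reflection (e' \<otimes> y) e' = y"
      using reflection_exchanges[OF e' y qe' qy] by blast
    obtain r2: "isometry (reflection (y \<otimes> e))" "reflection (y \<otimes> e) y = e"
      using reflection_exchanges[OF y e qy qe ye] by blast
    show ?thesis
      using isometry_comp[OF r2(1) r1(1)] r1(2) r2(2)
      by (intro exI[of _ "reflection (y \<otimes> e) \<circ> reflection (e' \<otimes> y)"])
        (auto simp: mem_orth_compl_iff reflection_def simps)
  qed
qed

lemma exists_common_partner:
  assumes e: "two_torsion e" and f: "two_torsion f" and e': "two_torsion e'" and f': "two_torsion f'"
    and q: "q_parity e c" "q_parity f c" "q_parity e' c" "q_parity f' c"
    and ef: "nonorth e f" and ef': "nonorth e' f'" and ee': "\<not> nonorth e e'"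
  shows "\<exists>y. two_torsion y \<and> nonorth y e \<and> nonorth y e' \<and> (q_parity y False \<or> c \<and> q_parity y True) \<and>
    orth_compl A q {e, f, e', f'} \<subseteq> orth_compl A q {y}"
proof -
  have ec: "e \<in> carrier A" and fc: "f \<in> carrier A" and e'c: "e' \<in> carrier A" and f'c: "f' \<in> carrier A"
    using e f e' f' by (simp_all add: two_torsion_carrier)
  have sym: "nonorth f e" "nonorth f' e'" "\<not> nonorth e' e" "nonorth f f' = nonorth f' f"
    using ef ef' ee' nonorth_sym ec fc e'c f'c by blast+
  have self: "\<not> nonorth e e" "\<not> nonorth e' e'"
    using not_nonorth_self e e' q by blast+
  note simps = nonorth_mult_left nonorth_mult_right two_torsion_mult e f e' f' ec fc e'c f'c
  have parity: "q_parity y c \<Longrightarrow> q_parity y False \<or> c \<and> q_parity y True" for y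
    by (cases c) simp_all
  consider "nonorth f e'" | "nonorth f' e" | "\<not> nonorth f e'" "\<not> nonorth f' e" "nonorth f f'" "\<not> c"
    | "\<not> nonorth f e'" "\<not> nonorth f' e" "\<not> (nonorth f f' \<and> \<not> c)"
    by blast
  then show ?thesis
  proof cases
    case 1
    then show ?thesis
      using f sym parity[OF q(2)] by (intro exI[of _ f]) (auto simp: mem_orth_compl_iff)
  next
    case 2
    then show ?thesis
      using f' sym parity[OF q(4)] by (intro exI[of _ f']) (auto simp: mem_orth_compl_iff)
  next
    case 3
    have "q_parity (f \<otimes> f' \<otimes> e) False"
      using q_parity_mult[OF m_closed[OF fc f'c] e q_parity_mult[OF fc f' q(2,4)] q(1)] 3 sym self
      by (simp add: simps)
    then show ?thesis
      using 3 sym self ee' by (intro exI[of _ "f \<otimes> f' \<otimes> e"]) (auto simp: mem_orth_compl_iff simps)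
  next
    case 4
    have "q_parity (f \<otimes> f') (nonorth f f')"
      using q_parity_mult[OF fc f' q(2,4)] by simp
    then show ?thesis
      using 4 sym by (intro exI[of _ "f \<otimes> f'"]) (auto simp: mem_orth_compl_iff simps)
  qed
qed

lemma exists_isometry_moving_vector:
  assumes e: "two_torsion e" and f: "two_torsion f" and e': "two_torsion e'" and f': "two_torsion f'"
    and q: "q_parity e c" "q_parity f c" "q_parity e' c" "q_parity f' c"
    and ef: "nonorth e f" and ef': "nonorth e' f'"
  shows "\<exists>\<rho>. isometry \<rho> \<and> \<rho> e' = e \<and> (\<forall>x\<in>orth_compl A q {e, f, e', f'}. \<rho> x = x)"
proof (cases "nonorth e' e")
  case True
  show ?thesis
    using reflection_exchanges[OF e' e q(3,1) True]
    by (intro exI[of _ "reflection (e' \<otimes> e)"])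
      (auto simp: mem_orth_compl_iff reflection_def nonorth_mult_right e e')
next
  case False
  then have ee': "\<not> nonorth e e'"
    using e e' nonorth_sym two_torsion_carrier by blast
  obtain y where y: "two_torsion y" "nonorth y e" "nonorth y e'" "q_parity y False \<or> c \<and> q_parity y True"
    and orth: "orth_compl A q {e, f, e', f'} \<subseteq> orth_compl A q {y}"
    using exists_common_partner[OF e f e' f' q ef ef' ee'] by blast
  obtain \<rho> where "isometry \<rho>" "\<rho> e' = e" and "\<forall>x\<in>orth_compl A q {e, e', y}. \<rho> x = x"
    using exists_isometry_via_partner[OF e e' y(1) q(1,3) ee' y(2-4)] by blast
  moreover have "orth_compl A q {e, f, e', f'} \<subseteq> orth_compl A q {e, e', y}"
    using orth by (auto simp: mem_orth_compl_iff)
  ultimately show ?thesis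
    by blast
qed

lemma exists_isometry_moving_partner:
  assumes e: "two_torsion e" and f: "two_torsion f" and f': "two_torsion f'"
    and q: "q_parity e c" "q_parity f c" "q_parity f' c"
    and ef: "nonorth e f" and ef': "nonorth e f'"
  shows "\<exists>\<tau>. isometry \<tau> \<and> \<tau> f' = f \<and> \<tau> e = e \<and> (\<forall>x\<in>orth_compl A q {e, f, f'}. \<tau> x = x)"
proof -
  have ec: "e \<in> carrier A" and fc: "f \<in> carrier A" and f'c: "f' \<in> carrier A"
    using e f f' by (simp_all add: two_torsion_carrier)
  have sym: "nonorth f e" "nonorth f' e" "nonorth f' f = nonorth f f'"
    using ef ef' nonorth_sym ec fc f'c by blast+
  have self: "\<not> nonorth e e" "\<not> nonorth f f" "\<not> nonorth f' f'"
    using not_nonorth_self e f f' q by blast+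
  note simps = nonorth_mult_left nonorth_mult_right two_torsion_mult e f f' ec fc f'c
  consider "nonorth f' f" | "\<not> nonorth f' f" "\<not> c" | "\<not> nonorth f' f" "c"
    by blast
  then show ?thesis
  proof cases
    case 1
    show ?thesis
      using reflection_exchanges[OF f' f q(3,2) 1] ef ef'
      by (intro exI[of _ "reflection (f' \<otimes> f)"])
        (auto simp: mem_orth_compl_iff reflection_def simps)
  next
    case 2
    have "q_parity e False" "\<not> nonorth f f'"
      using q(1) 2 sym by simp_all
    then show ?thesis
      using eichler_exchanges[OF e f f' _ q(2,3) _ ef ef'] self ef ef' ec
      by (intro exI[of _ "eichler e (f \<otimes> f')"]) (auto simp: mem_orth_compl_iff eichler_def simps)
  next
    case 3
    have ef_parity: "q_parity (e \<otimes> f) c" and f'_ef: "nonorth f' (e \<otimes> f)"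
      using q_parity_mult[OF ec f q(1,2)] 3 ef sym by (simp_all add: simps)
    obtain r1: "isometry (reflection (f' \<otimes> (e \<otimes> f)))" "reflection (f' \<otimes> (e \<otimes> f)) f' = e \<otimes> f"
      using reflection_exchanges[OF f' two_torsion_mult[OF e f] q(3) ef_parity f'_ef] by blast
    have r2: "isometry (reflection e)" "reflection e (e \<otimes> f) = f"
      using reflection_isometry[OF e] q(1) 3 self sym two_torsion_cancel_around[OF e fc]
      by (simp_all add: reflection_def simps m_assoc)
    show ?thesis
      using isometry_comp[OF r2(1) r1(1)] r1(2) r2(2) self ef ef'
      by (intro exI[of _ "reflection e \<circ> reflection (f' \<otimes> (e \<otimes> f))"])
        (auto simp: mem_orth_compl_iff reflection_def simps)
  qed
qed

lemma exists_isometry_moving_pair: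
  assumes e: "two_torsion e" and f: "two_torsion f" and e': "two_torsion e'" and f': "two_torsion f'"
    and q: "q_parity e c" "q_parity f c" "q_parity e' c" "q_parity f' c"
    and ef: "nonorth e f" and ef': "nonorth e' f'"
  shows "\<exists>\<sigma>. isometry \<sigma> \<and> \<sigma> e' = e \<and> \<sigma> f' = f \<and> (\<forall>x\<in>orth_compl A q {e, f, e', f'}. \<sigma> x = x)"
proof -
  obtain \<rho> where \<rho>: "isometry \<rho>" "\<rho> e' = e" and \<rho>_fixes: "\<forall>x\<in>orth_compl A q {e, f, e', f'}. \<rho> x = x"
    using exists_isometry_moving_vector[OF e f e' f' q ef ef'] by blast
  have e'c: "e' \<in> carrier A" and f'c: "f' \<in> carrier A"
    using e' f' by (simp_all add: two_torsion_carrier)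
  have "two_torsion (\<rho> f')" "q_parity (\<rho> f') c" "nonorth e (\<rho> f')"
    using isometry_two_torsion[OF \<rho>(1) f'] isometry_q_parity[OF \<rho>(1) f'c] q(4)
      isometry_nonorth[OF \<rho>(1) e'c f'c] \<rho>(2) ef' by simp_all
  then obtain \<tau> where \<tau>: "isometry \<tau>" "\<tau> (\<rho> f') = f" "\<tau> e = e"
    and \<tau>_fixes: "\<forall>x\<in>orth_compl A q {e, f, \<rho> f'}. \<tau> x = x"
    using exists_isometry_moving_partner[OF e f _ q(1,2) _ ef] by blast
  have "x \<in> orth_compl A q {e, f, \<rho> f'}" if "x \<in> orth_compl A q {e, f, e', f'}" for x
    \<comment> \<open>\<rho> preserves b and fixes x, so x \<bottom> f' gives x \<bottom> \<rho> f'\<close>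
    using that \<rho>_fixes isometry_nonorth[OF \<rho>(1) _ f'c, of x] by (auto simp: mem_orth_compl_iff)
  then show ?thesis
    using isometry_comp[OF \<tau>(1) \<rho>(1)] \<rho>(2) \<tau>(2,3) \<rho>_fixes \<tau>_fixes
    by (intro exI[of _ "\<tau> \<circ> \<rho>"]) auto
qed

end

section \<open>Orthogonal sums of copies of u(2) and v(2)\<close>

lemma comm_group_sumUV: "comm_group (sumUV m n)"
proof (rule comm_groupI)
  have bit: "x \<in> carrier (sumUV m n) \<Longrightarrow> x i mod 2 = x i" for x i
    by (auto simp: sumUV_def dest: spec[of _ i])
  show "x \<otimes>\<^bsub>sumUV m n\<^esub> y \<in> carrier (sumUV m n)"
    if "x \<in> carrier (sumUV m n)" "y \<in> carrier (sumUV m n)" for x y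
    using that by (auto simp: sumUV_def pos_mod_bound)
  show "\<one>\<^bsub>sumUV m n\<^esub> \<in> carrier (sumUV m n)"
    by (simp add: sumUV_def)
  show "x \<otimes>\<^bsub>sumUV m n\<^esub> y \<otimes>\<^bsub>sumUV m n\<^esub> z = x \<otimes>\<^bsub>sumUV m n\<^esub> (y \<otimes>\<^bsub>sumUV m n\<^esub> z)" for x y z
    by (simp add: sumUV_def mod_add_left_eq mod_add_right_eq add.assoc)
  show "x \<otimes>\<^bsub>sumUV m n\<^esub> y = y \<otimes>\<^bsub>sumUV m n\<^esub> x" for x y
    by (simp add: sumUV_def add.commute)
  show "\<one>\<^bsub>sumUV m n\<^esub> \<otimes>\<^bsub>sumUV m n\<^esub> x = x" if "x \<in> carrier (sumUV m n)" for x
    using bit[OF that] by (simp add: sumUV_def)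
  show "\<exists>y\<in>carrier (sumUV m n). y \<otimes>\<^bsub>sumUV m n\<^esub> x = \<one>\<^bsub>sumUV m n\<^esub>"
    if "x \<in> carrier (sumUV m n)" for x
    using that by (intro bexI[of _ x]) (auto simp: sumUV_def)
qed

lemma group_sumUV: "group (sumUV m n)"
  using comm_group_sumUV by (simp add: comm_group_def)

lemma qUV_add:
  "qUV m n (\<lambda>t. f t + g t) = qUV m n f + qUV m n g
     + of_int (\<Sum>l<m + n. f (2*l) * g (2*l+1) + g (2*l) * f (2*l+1))
     + 2 * of_int (\<Sum>l\<in>{m..<m + n}. f (2*l) * g (2*l) + f (2*l+1) * g (2*l+1))"
proof -
  have "{..<m + n} = {..<m} \<union> {m..<m + n}" and "{..<m} \<inter> {m..<m + n} = {}"
    by auto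
  then have "(\<Sum>l<m + n. h l) = (\<Sum>l<m. h l) + (\<Sum>l\<in>{m..<m + n}. h l)" for h :: "nat \<Rightarrow> int"
    by (simp add: sum.union_disjoint)
  then show ?thesis
    unfolding qUV_def by (simp add: sum.distrib sum_distrib_left algebra_simps power2_eq_square)
qed

definition unit_vec :: "nat \<Rightarrow> nat \<Rightarrow> int" where
  "unit_vec i t = of_bool (t = i)"

lemma unit_vec_carrier: "i < 2 * (m + n) \<Longrightarrow> unit_vec i \<in> carrier (sumUV m n)"
  by (auto simp: sumUV_def unit_vec_def)

lemma unit_vec_mult_self: "unit_vec i \<otimes>\<^bsub>sumUV m n\<^esub> unit_vec i = \<one>\<^bsub>sumUV m n\<^esub>"
  by (auto simp: sumUV_def unit_vec_def)

lemma unit_vec_mult: "i \<noteq> j \<Longrightarrow> unit_vec i \<otimes>\<^bsub>sumUV m n\<^esub> unit_vec j = (\<lambda>t. unit_vec i t + unit_vec j t)"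
  by (auto simp: sumUV_def unit_vec_def)

lemma coord_in_block_iff: "(2 * l = i \<or> 2 * l + 1 = i) \<longleftrightarrow> l = i div (2::nat)"
  by presburger

lemma qUV_unit_vec:
  assumes "i < 2 * (m + n)"
  shows "qUV m n (unit_vec i) = of_bool (m \<le> i div 2)"
proof -
  have u: "(\<Sum>l<m. unit_vec i (2*l) * unit_vec i (2*l+1)) = 0"
    by (intro sum.neutral) (auto simp: unit_vec_def)
  have "(unit_vec i (2*l))\<^sup>2 + unit_vec i (2*l) * unit_vec i (2*l+1) + (unit_vec i (2*l+1))\<^sup>2
      = (if l = i div 2 then 1 else 0)" for l
    using coord_in_block_iff[of l i] by (auto simp: unit_vec_def)
  then have v: "(\<Sum>l\<in>{m..<m+n}. (unit_vec i (2*l))\<^sup>2 + unit_vec i (2*l) * unit_vec i (2*l+1)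
        + (unit_vec i (2*l+1))\<^sup>2) = (\<Sum>l\<in>{m..<m+n}. if l = i div 2 then 1 else 0)"
    by simp
  have "i div 2 < m + n"
    using assms by presburger
  then show ?thesis
    unfolding qUV_def u v by simp
qed

lemma bform_sumUV_unit_vec:
  assumes i: "i < 2 * (m + n)" and j: "j < 2 * (m + n)" and ij: "i \<noteq> j"
  shows "bform (sumUV m n) (qUV m n) (unit_vec i) (unit_vec j) = of_bool (i div 2 = j div 2) / 2"
proof -
  have "unit_vec i (2*l) * unit_vec j (2*l+1) + unit_vec j (2*l) * unit_vec i (2*l+1)
      = (if l = i div 2 then of_bool (i div 2 = j div 2) else 0)" for l
    using ij coord_in_block_iff[of l i] coord_in_block_iff[of l j] by (auto simp: unit_vec_def)
  then have cross: "(\<Sum>l<m+n. unit_vec i (2*l) * unit_vec j (2*l+1) + unit_vec j (2*l) * unit_vec i (2*l+1))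
      = (\<Sum>l<m+n. if l = i div 2 then of_bool (i div 2 = j div 2) else 0)"
    by simp
  have diag: "(\<Sum>l\<in>{m..<m+n}. unit_vec i (2*l) * unit_vec j (2*l) + unit_vec i (2*l+1) * unit_vec j (2*l+1)) = 0"
    using ij by (intro sum.neutral) (auto simp: unit_vec_def)
  show ?thesis
    using i unfolding bform_def unit_vec_mult[OF ij] qUV_add cross diag by simp
qed

lemma sumUV_induct [consumes 1, case_names one mult]:
  assumes x: "x \<in> carrier (sumUV m n)"
    and one: "P \<one>\<^bsub>sumUV m n\<^esub>"
    and mult: "\<And>y i. y \<in> carrier (sumUV m n) \<Longrightarrow> i < 2 * (m + n) \<Longrightarrow> P y \<Longrightarrow>
      P (y \<otimes>\<^bsub>sumUV m n\<^esub> unit_vec i)"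
  shows "P x"
proof -
  define trunc where "trunc M = (\<lambda>i. if i < M then x i else 0)" for M
  have bits: "x i = 0 \<or> x i = 1" "x i mod 2 = x i" "2 * (m + n) \<le> i \<Longrightarrow> x i = 0" for i
    using x by (auto simp: sumUV_def dest: spec[of _ i])
  have "P (trunc M)" for M
  proof (induction M)
    case 0
    have "trunc 0 = \<one>\<^bsub>sumUV m n\<^esub>"
      by (simp add: trunc_def sumUV_def)
    then show ?case
      using one by simp
  next
    case (Suc M)
    show ?case
    proof (cases "x M = 1")
      case True
      then have "M < 2 * (m + n)"
        using bits(3)[of M] by fastforce
      moreover have "trunc (Suc M) = trunc M \<otimes>\<^bsub>sumUV m n\<^esub> unit_vec M"
        using True bits(2) by (auto simp: trunc_def sumUV_def unit_vec_def fun_eq_iff less_Suc_eq)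
      moreover have "trunc M \<in> carrier (sumUV m n)"
        using x by (auto simp: sumUV_def trunc_def)
      ultimately show ?thesis
        using mult Suc.IH by simp
    next
      case False
      then have "trunc (Suc M) = trunc M"
        using bits(1)[of M] by (auto simp: trunc_def fun_eq_iff less_Suc_eq)
      then show ?thesis
        using Suc.IH by simp
    qed
  qed
  moreover have "trunc (2 * (m + n)) = x"
    using bits(3) by (auto simp: trunc_def fun_eq_iff)
  ultimately show ?thesis
    by metis
qed

lemma hom_sumUV_eqI:
  assumes G: "group G" and f: "f \<in> hom (sumUV m n) G" and g: "g \<in> hom (sumUV m n) G"
    and agree: "\<And>i. i < 2 * (m + n) \<Longrightarrow> f (unit_vec i) = g (unit_vec i)"
    and x: "x \<in> carrier (sumUV m n)"
  shows "f x = g x"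
  using x
proof (induction rule: sumUV_induct)
  case one
  show ?case
    using hom_one[OF f group_sumUV G] hom_one[OF g group_sumUV G] by simp
next
  case (mult y i)
  then show ?case
    using agree hom_mult[OF f mult.hyps(1) unit_vec_carrier] hom_mult[OF g mult.hyps(1) unit_vec_carrier]
    by simp
qed

section \<open>Extending an isometry between two embeddings\<close>

context quadratic_group
begin

lemma embedding_unit_vec:
  assumes \<phi>: "qf_embedding (sumUV m n) (qUV m n) A q \<phi>" and i: "i < 2 * (m + n)"
  shows "two_torsion (\<phi> (unit_vec i))" "q_parity (\<phi> (unit_vec i)) (m \<le> i div 2)"
proof -
  have hom: "\<phi> \<in> hom (sumUV m n) A"
    using \<phi> by (simp add: qf_embedding_def)
  have "\<phi> (unit_vec i) \<otimes> \<phi> (unit_vec i) = \<phi> \<one>\<^bsub>sumUV m n\<^esub>"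
    using hom_mult[OF hom unit_vec_carrier[OF i] unit_vec_carrier[OF i]] by (simp add: unit_vec_mult_self)
  also have "\<dots> = \<one>"
    using hom_one[OF hom group_sumUV is_group] by simp
  finally show "two_torsion (\<phi> (unit_vec i))"
    using hom_in_carrier[OF hom unit_vec_carrier[OF i]] by (simp add: two_torsion_def)
  have "cong2 (q (\<phi> (unit_vec i))) (qUV m n (unit_vec i))"
    using \<phi> unit_vec_carrier[OF i] by (simp add: qf_embedding_def)
  then show "q_parity (\<phi> (unit_vec i)) (m \<le> i div 2)"
    unfolding q_parity_def qUV_unit_vec[OF i] .
qed

lemma embedding_unit_vec_nonorth:
  assumes \<phi>: "qf_embedding (sumUV m n) (qUV m n) A q \<phi>"
    and i: "i < 2 * (m + n)" and j: "j < 2 * (m + n)"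
  shows "nonorth (\<phi> (unit_vec i)) (\<phi> (unit_vec j)) \<longleftrightarrow> i \<noteq> j \<and> i div 2 = j div 2"
proof (cases "i = j")
  case True
  then show ?thesis
    using not_nonorth_self embedding_unit_vec[OF \<phi> i] by simp
next
  case False
  have "cong1 (bform A q (\<phi> (unit_vec i)) (\<phi> (unit_vec j))) (of_bool (i div 2 = j div 2) / 2)"
    using embedding_bform[OF \<phi> unit_vec_carrier[OF i] unit_vec_carrier[OF j]]
      monoid.m_closed[OF group.is_monoid[OF group_sumUV] unit_vec_carrier[OF i] unit_vec_carrier[OF j]]
      bform_sumUV_unit_vec[OF i j False] by simp
  then show ?thesis
    using False not_cong1_zero_half unfolding nonorth_def by (cases "i div 2 = j div 2") auto
qed

lemma isometry_comp_embedding: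
  assumes h: "isometry h" and \<phi>: "qf_embedding Q p A q \<phi>"
  shows "qf_embedding Q p A q (h \<circ> \<phi>)"
  unfolding qf_embedding_def
proof (intro conjI ballI)
  have \<phi>_hom: "\<phi> \<in> hom Q A" and \<phi>_inj: "inj_on \<phi> (carrier Q)"
    using \<phi> by (simp_all add: qf_embedding_def)
  show "h \<circ> \<phi> \<in> hom Q A"
    using \<phi>_hom isometry_carrier[OF h] isometry_mult[OF h]
    by (intro homI) (simp_all add: hom_in_carrier hom_mult)
  show "inj_on (h \<circ> \<phi>) (carrier Q)"
    using \<phi>_inj h \<phi>_hom by (auto simp: isometry_def bij_betw_def hom_def intro: comp_inj_on inj_on_subset)
  show "cong2 (q ((h \<circ> \<phi>) x)) (p x)" if "x \<in> carrier Q" for x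
    using isometry_q[OF h hom_in_carrier[OF \<phi>_hom that]] \<phi> that
    by (auto simp: qf_embedding_def intro: cong2_trans)
qed

lemma exists_isometry_matching_block:
  assumes \<phi>: "qf_embedding (sumUV m n) (qUV m n) A q \<phi>"
    and \<psi>: "qf_embedding (sumUV m n) (qUV m n) A q \<psi>" and k: "k < m + n"
  shows "\<exists>\<sigma>. isometry \<sigma> \<and> \<sigma> (\<phi> (unit_vec (2*k))) = \<psi> (unit_vec (2*k))
    \<and> \<sigma> (\<phi> (unit_vec (2*k+1))) = \<psi> (unit_vec (2*k+1))
    \<and> (\<forall>x\<in>orth_compl A q {\<psi> (unit_vec (2*k)), \<psi> (unit_vec (2*k+1)),
                            \<phi> (unit_vec (2*k)), \<phi> (unit_vec (2*k+1))}. \<sigma> x = x)"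
proof (rule exists_isometry_moving_pair)
  have i: "2*k < 2*(m+n)" "2*k+1 < 2*(m+n)" and blk: "2*k div 2 = k" "(2*k+1) div 2 = k"
    using k by auto
  show "two_torsion (\<psi> (unit_vec (2*k)))" "two_torsion (\<psi> (unit_vec (2*k+1)))"
    "two_torsion (\<phi> (unit_vec (2*k)))" "two_torsion (\<phi> (unit_vec (2*k+1)))"
    using embedding_unit_vec(1)[OF \<psi>] embedding_unit_vec(1)[OF \<phi>] i by simp_all
  show "q_parity (\<psi> (unit_vec (2*k))) (m \<le> k)" "q_parity (\<psi> (unit_vec (2*k+1))) (m \<le> k)"
    "q_parity (\<phi> (unit_vec (2*k))) (m \<le> k)" "q_parity (\<phi> (unit_vec (2*k+1))) (m \<le> k)"
    using embedding_unit_vec(2)[OF \<psi> i(1)] embedding_unit_vec(2)[OF \<psi> i(2)]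
      embedding_unit_vec(2)[OF \<phi> i(1)] embedding_unit_vec(2)[OF \<phi> i(2)]
    unfolding blk by simp_all
  show "nonorth (\<psi> (unit_vec (2*k))) (\<psi> (unit_vec (2*k+1)))"
    "nonorth (\<phi> (unit_vec (2*k))) (\<phi> (unit_vec (2*k+1)))"
    using embedding_unit_vec_nonorth[OF \<psi> i] embedding_unit_vec_nonorth[OF \<phi> i] by simp_all
qed

lemma exists_isometry_on_unit_vecs:
  assumes \<phi>: "qf_embedding (sumUV m n) (qUV m n) A q \<phi>"
    and \<psi>: "qf_embedding (sumUV m n) (qUV m n) A q \<psi>"
  shows "k \<le> m + n \<Longrightarrow> \<exists>h. isometry h \<and> (\<forall>j<2*k. h (\<phi> (unit_vec j)) = \<psi> (unit_vec j))"
proof (induction k)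
  case 0
  show ?case
    using isometry_id by auto
next
  case (Suc k)
  then obtain h where h: "isometry h" and h_vecs: "\<forall>j<2*k. h (\<phi> (unit_vec j)) = \<psi> (unit_vec j)"
    by auto
  have h\<phi>: "qf_embedding (sumUV m n) (qUV m n) A q (h \<circ> \<phi>)"
    using isometry_comp_embedding[OF h \<phi>] .
  obtain \<sigma> where \<sigma>: "isometry \<sigma>" "\<sigma> (h (\<phi> (unit_vec (2*k)))) = \<psi> (unit_vec (2*k))"
      "\<sigma> (h (\<phi> (unit_vec (2*k+1)))) = \<psi> (unit_vec (2*k+1))"
    and \<sigma>_fixes: "\<forall>x\<in>orth_compl A q {\<psi> (unit_vec (2*k)), \<psi> (unit_vec (2*k+1)),
                            h (\<phi> (unit_vec (2*k))), h (\<phi> (unit_vec (2*k+1)))}. \<sigma> x = x"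
    using exists_isometry_matching_block[OF h\<phi> \<psi>, of k] Suc.prems by auto
  have "\<sigma> (h (\<phi> (unit_vec j))) = \<psi> (unit_vec j)" if j: "j < 2 * Suc k" for j
  proof -
    have "j < 2*k \<or> j = 2*k \<or> j = 2*k+1"
      using j by arith
    moreover have "\<sigma> (h (\<phi> (unit_vec j))) = \<psi> (unit_vec j)" if "j < 2*k"
    proof -
      have jN: "j < 2*(m+n)" and i: "2*k < 2*(m+n)" "2*k+1 < 2*(m+n)" and "j div 2 \<noteq> k"
        using that Suc.prems by auto
      then have "\<psi> (unit_vec j) \<in> orth_compl A q {\<psi> (unit_vec (2*k)), \<psi> (unit_vec (2*k+1)),
                            h (\<phi> (unit_vec (2*k))), h (\<phi> (unit_vec (2*k+1)))}"
        using embedding_unit_vec_nonorth[OF \<psi> jN i(1)] embedding_unit_vec_nonorth[OF \<psi> jN i(2)]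
          embedding_unit_vec_nonorth[OF h\<phi> jN i(1)] embedding_unit_vec_nonorth[OF h\<phi> jN i(2)]
          two_torsion_carrier[OF embedding_unit_vec(1)[OF \<psi> jN]] h_vecs that
        by (simp add: mem_orth_compl_iff)
      then show ?thesis
        using \<sigma>_fixes h_vecs that by simp
    qed
    ultimately show ?thesis
      using \<sigma>(2,3) by blast
  qed
  then show ?case
    using isometry_comp[OF \<sigma>(1) h] by auto
qed

lemma exists_isometry_extending:
  assumes \<phi>: "qf_embedding (sumUV m n) (qUV m n) A q \<phi>"
    and \<psi>: "qf_embedding (sumUV m n) (qUV m n) A q \<psi>"
  shows "\<exists>h. isometry h \<and> (\<forall>x\<in>carrier (sumUV m n). h (\<phi> x) = \<psi> x)"
proof -
  obtain h where h: "isometry h" and h_vecs: "\<forall>j<2*(m+n). h (\<phi> (unit_vec j)) = \<psi> (unit_vec j)"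
    using exists_isometry_on_unit_vecs[OF \<phi> \<psi> order_refl] by blast
  have \<psi>_hom: "\<psi> \<in> hom (sumUV m n) A"
    using \<psi> by (simp add: qf_embedding_def)
  have "h \<circ> \<phi> \<in> hom (sumUV m n) A"
    using isometry_comp_embedding[OF h \<phi>] by (simp add: qf_embedding_def)
  then have "(h \<circ> \<phi>) x = \<psi> x" if "x \<in> carrier (sumUV m n)" for x
    using hom_sumUV_eqI[OF is_group _ \<psi>_hom _ that] h_vecs by simp
  then show ?thesis
    using h by auto
qed

end

theorem lemma7p6:
  fixes A :: "('a, 'b) monoid_scheme" and qA :: "'a \<Rightarrow> rat"
    and m n :: nat and \<phi> \<psi> :: "(nat \<Rightarrow> int) \<Rightarrow> 'a"
  assumes "finite_quadratic_form A qA"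
    and "nondegenerate A qA"
    and "qf_embedding (sumUV m n) (qUV m n) A qA \<phi>"
    and "qf_embedding (sumUV m n) (qUV m n) A qA \<psi>"
  shows "qf_isometric
           (A\<lparr>carrier := orth_compl A qA (\<phi> ` carrier (sumUV m n))\<rparr>) qA
           (A\<lparr>carrier := orth_compl A qA (\<psi> ` carrier (sumUV m n))\<rparr>) qA"
proof -
  interpret quadratic_group A qA
    using assms(1) by (rule finite_quadratic_form_imp_quadratic_group)
  obtain h where h: "isometry h" and h_\<phi>: "\<forall>x\<in>carrier (sumUV m n). h (\<phi> x) = \<psi> x"
    using exists_isometry_extending[OF assms(3,4)] by blast
  have "h ` \<phi> ` carrier (sumUV m n) = \<psi> ` carrier (sumUV m n)"
    using h_\<phi> by (force simp: image_image)
  moreover have "\<phi> ` carrier (sumUV m n) \<subseteq> carrier A"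
    using assms(3) by (auto simp: qf_embedding_def hom_in_carrier)
  ultimately show ?thesis
    using isometry_restrict_orth_compl[OF h, of "\<phi> ` carrier (sumUV m n)"] by simp
qed

end
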